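(* For any constant $0<\eta\leq 1/4$, every $n$-vertex $d$-regular graph $G$ with $2/\eta\leq d\leq \eta\sqrt{n}$ contains $d$ pairwise vertex-disjoint copies of the star $K_{1,(1-\eta/2)d}$.
   Context: Floors are omitted: $K_{1,(1-\eta/2)d}$ means the star with $\lfloor(1-\eta/2)d\rfloor$ leaves. *)

theory Defs
  imports "HOL-Analysis.Analysis"
begin

definition simple_graph :: "'a set \<Rightarrow> ('a \<Rightarrow> 'a \<Rightarrow> bool) \<Rightarrow> bool" where
  "simple_graph V E \<longleftrightarrow> finite V \<and>
     (\<forall>u v. E u v \<longrightarrow> u \<in> V \<and> v \<in> V) \<and>
     (\<forall>u v. E u v \<longrightarrow> E v u) \<and> (\<forall>v. \<not> E v v)"

definition neighbours :: "'a set \<Rightarrow> ('a \<Rightarrow> 'a \<Rightarrow> bool) \<Rightarrow> 'a \<Rightarrow> 'a set" where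
  "neighbours V E v = {u \<in> V. E v u}"

definition regular :: "'a set \<Rightarrow> ('a \<Rightarrow> 'a \<Rightarrow> bool) \<Rightarrow> nat \<Rightarrow> bool" where
  "regular V E d \<longleftrightarrow> (\<forall>v \<in> V. card (neighbours V E v) = d)"

text \<open>A copy of the star K_{1,k} in the graph: a centre c and a set L of k
  leaves, all adjacent to c (c is not in L since E is irreflexive).\<close>
definition is_star :: "'a set \<Rightarrow> ('a \<Rightarrow> 'a \<Rightarrow> bool) \<Rightarrow> nat \<Rightarrow> 'a \<Rightarrow> 'a set \<Rightarrow> bool" where
  "is_star V E k c L \<longleftrightarrow> c \<in> V \<and> L \<subseteq> neighbours V E c \<and> card L = k"

end

theory Submission
  imports Defs
begin

text \<open>Build the stars greedily. Once fewer than d stars are placed they cover a set U of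
  at most d(k+1) \<le> d^2 \<le> \<eta>^2 n vertices. At most |U| d edges leave U, so some vertex outside U
  has at most d - k neighbours in U, hence k neighbours outside U: a new disjoint star.
  The choice k = \<lfloor>(1 - \<eta>/2) d\<rfloor> makes d - k + 1 > \<eta> d / 2, which, together with |U| \<le> \<eta>^2 n
  and \<eta> \<le> 1/4, is enough for this counting.\<close>

definition disjoint_stars ::
    "'a set \<Rightarrow> ('a \<Rightarrow> 'a \<Rightarrow> bool) \<Rightarrow> nat \<Rightarrow> nat \<Rightarrow> (nat \<Rightarrow> 'a) \<Rightarrow> (nat \<Rightarrow> 'a set) \<Rightarrow> bool" where
  "disjoint_stars V E k m c L \<longleftrightarrow>
     (\<forall>i < m. is_star V E k (c i) (L i)) \<and>
     (\<forall>i < m. \<forall>j < m. i \<noteq> j \<longrightarrow> insert (c i) (L i) \<inter> insert (c j) (L j) = {})"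

lemma card_neighbours_Int_eq_sum:
  assumes "finite U" "U \<subseteq> V"
  shows "card (neighbours V E c \<inter> U) = (\<Sum>u\<in>U. if E c u then 1 else 0)"
proof -
  have "neighbours V E c \<inter> U = {u \<in> U. E c u}"
    using assms(2) unfolding neighbours_def by auto
  then show ?thesis
    using assms(1) by (simp add: sum.If_cases Int_def)
qed

lemma exists_vertex_few_neighbours_in:
  assumes sg: "simple_graph V E" and deg: "\<And>v. v \<in> V \<Longrightarrow> card (neighbours V E v) \<le> d"
    and UV: "U \<subseteq> V" and lt: "card U * d < card (V - U) * (t + 1)"
  shows "\<exists>c \<in> V - U. card (neighbours V E c \<inter> U) \<le> t"
proof (rule ccontr)
  assume "\<not> ?thesis"
  then have many: "\<And>c. c \<in> V - U \<Longrightarrow> t + 1 \<le> card (neighbours V E c \<inter> U)"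
    by force
  have finV: "finite V" using sg unfolding simple_graph_def by auto
  with UV have finU: "finite U" by (rule finite_subset)
  have into_u: "(\<Sum>c\<in>V - U. if E c u then 1 else 0) \<le> d" if u: "u \<in> U" for u
  proof -
    have "{c \<in> V - U. E c u} \<subseteq> neighbours V E u"
      using sg unfolding neighbours_def simple_graph_def by auto
    then have "card {c \<in> V - U. E c u} \<le> card (neighbours V E u)"
      by (rule card_mono[rotated]) (simp add: neighbours_def finV)
    also have "\<dots> \<le> d" using deg u UV by auto
    finally show ?thesis
      using finV by (simp add: sum.If_cases Int_def)
  qed
  have "card (V - U) * (t + 1) \<le> (\<Sum>c\<in>V - U. card (neighbours V E c \<inter> U))"
    using sum_mono[of "V - U" "\<lambda>_. t + 1", OF many] by simp
  also have "\<dots> = (\<Sum>c\<in>V - U. \<Sum>u\<in>U. if E c u then 1 else 0)"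
    using card_neighbours_Int_eq_sum[OF finU UV] by simp
  also have "\<dots> = (\<Sum>u\<in>U. \<Sum>c\<in>V - U. if E c u then 1 else 0)"
    by (rule sum.swap)
  also have "\<dots> \<le> card U * d"
    using sum_mono[of U _ "\<lambda>_. d", OF into_u] by simp
  finally show False using lt by simp
qed

lemma disjoint_stars_0: "disjoint_stars V E k 0 c L"
  by (simp add: disjoint_stars_def)

lemma disjoint_stars_extend:
  assumes "disjoint_stars V E k m c L" and "is_star V E k c0 L0"
    and "insert c0 L0 \<inter> (\<Union>i<m. insert (c i) (L i)) = {}"
  shows "disjoint_stars V E k (Suc m) (c(m := c0)) (L(m := L0))"
  using assms unfolding disjoint_stars_def
  by (auto simp: less_Suc_eq Int_commute)

lemma card_disjoint_stars_vertices_le: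
  assumes "disjoint_stars V E k m c L"
  shows "card (\<Union>i<m. insert (c i) (L i)) \<le> m * (k + 1)"
proof -
  have "card (\<Union>i<m. insert (c i) (L i)) \<le> (\<Sum>i<m. card (insert (c i) (L i)))"
    by (rule card_UN_le) simp
  also have "\<dots> \<le> (\<Sum>i<m. k + 1)"
  proof (rule sum_mono)
    fix i assume "i \<in> {..<m}"
    then have "card (L i) = k"
      using assms unfolding disjoint_stars_def is_star_def by auto
    then show "card (insert (c i) (L i)) \<le> k + 1"
      by (cases "finite (L i)") (auto simp: card_insert_if)
  qed
  finally show ?thesis by simp
qed

lemma disjoint_stars_vertices_subset:
  assumes "disjoint_stars V E k m c L"
  shows "(\<Union>i<m. insert (c i) (L i)) \<subseteq> V"
  using assms unfolding disjoint_stars_def is_star_def neighbours_def by auto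

lemma exists_star_avoiding:
  assumes sg: "simple_graph V E" and reg: "regular V E d" and "k \<le> d"
    and UV: "U \<subseteq> V" and room: "card U * d < card (V - U) * (d - k + 1)"
  shows "\<exists>c0 L0. is_star V E k c0 L0 \<and> insert c0 L0 \<inter> U = {}"
proof -
  have deg: "card (neighbours V E v) = d" if "v \<in> V" for v
    using reg that unfolding regular_def by auto
  obtain c0 where c0: "c0 \<in> V - U" and few: "card (neighbours V E c0 \<inter> U) \<le> d - k"
    using exists_vertex_few_neighbours_in[OF sg _ UV room] deg by fastforce
  have "finite (neighbours V E c0)"
    using sg unfolding simple_graph_def neighbours_def by auto
  then have "card (neighbours V E c0 - U) = d - card (neighbours V E c0 \<inter> U)"
    using deg c0 by (simp add: card_Diff_subset_Int)
  then have "k \<le> card (neighbours V E c0 - U)"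
    using few \<open>k \<le> d\<close> by linarith
  then obtain L0 where L0: "L0 \<subseteq> neighbours V E c0 - U" "card L0 = k"
    by (meson obtain_subset_with_card_n)
  then show ?thesis
    using c0 unfolding is_star_def by blast
qed

text \<open>Only the final bound M = m(k+1) on the covered set enters the counting, because
  |U| d < (|V| - |U|)(d - k + 1) only gets easier as |U| decreases.\<close>

lemma disjoint_stars_greedy:
  assumes sg: "simple_graph V E" and reg: "regular V E d" and "k \<le> d"
    and room: "m * (k + 1) * d < (card V - m * (k + 1)) * (d - k + 1)"
  shows "\<exists>c L. disjoint_stars V E k m c L"
proof -
  have "\<exists>c L. disjoint_stars V E k j c L" if "j \<le> m" for j
    using that
  proof (induction j)
    case 0
    show ?case using disjoint_stars_0 by blast
  next
    case (Suc j)
    then obtain c L where stars: "disjoint_stars V E k j c L" by auto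
    define U where "U = (\<Union>i<j. insert (c i) (L i))"
    have UV: "U \<subseteq> V"
      unfolding U_def by (rule disjoint_stars_vertices_subset[OF stars])
    have "card U \<le> m * (k + 1)"
      using card_disjoint_stars_vertices_le[OF stars] Suc.prems
      unfolding U_def by (meson le_trans Suc_leD mult_le_mono1)
    then have "card U * d < (card V - card U) * (d - k + 1)"
      using room by (meson diff_le_mono2 le_less_trans less_le_trans mult_le_mono1)
    moreover have "card (V - U) = card V - card U"
      using UV sg unfolding simple_graph_def by (meson card_Diff_subset finite_subset)
    ultimately obtain c0 L0 where "is_star V E k c0 L0" "insert c0 L0 \<inter> U = {}"
      using exists_star_avoiding[OF sg reg \<open>k \<le> d\<close> UV] by metis
    then show ?case
      using disjoint_stars_extend[OF stars] unfolding U_def by blast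
  qed
  then show ?thesis by blast
qed

lemma floor_star_size_bounds:
  fixes \<eta> :: real
  assumes "0 < \<eta>" "\<eta> \<le> 1" "2 / \<eta> \<le> real d" and k: "k = nat \<lfloor>(1 - \<eta>/2) * real d\<rfloor>"
  shows "k + 1 \<le> d" and "\<eta> * real d / 2 \<le> real (d - k)"
proof -
  have two: "2 \<le> \<eta> * real d" using assms(1,3) by (simp add: field_simps)
  have "0 \<le> (1 - \<eta>/2) * real d" using assms(2) by simp
  then have "real k \<le> (1 - \<eta>/2) * real d"
    unfolding k by linarith
  then have "real k \<le> real d - \<eta> * real d / 2" by (simp add: algebra_simps)
  with two show "k + 1 \<le> d" and "\<eta> * real d / 2 \<le> real (d - k)"
    by (simp_all add: of_nat_diff)
qed

lemma star_counting_room: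
  fixes \<eta> :: real
  assumes \<eta>: "0 < \<eta>" "\<eta> \<le> 1/4" and kd: "k + 1 \<le> d" and gap: "\<eta> * real d / 2 \<le> real (d - k)"
    and dn: "real d \<le> \<eta> * sqrt (real n)"
  shows "d * (k + 1) * d < (n - d * (k + 1)) * (d - k + 1)"
proof -
  define M where "M = d * (k + 1)"
  have d: "0 < real d" using kd by simp
  have "real d ^ 2 \<le> (\<eta> * sqrt (real n)) ^ 2"
    using dn d by (intro power_mono) auto
  then have d2: "real d ^ 2 \<le> \<eta>^2 * real n" by (simp add: power_mult_distrib)
  have "M \<le> d * d"
    using kd unfolding M_def by (rule mult_le_mono2)
  then have "real M \<le> real d ^ 2"
    unfolding power2_eq_square by (metis of_nat_le_iff of_nat_mult)
  with d2 have M: "real M \<le> \<eta>^2 * real n" by linarith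
  have "0 < \<eta>^2 * real n" using d2 d by (smt (verit) zero_less_power)
  then have n: "0 < real n" by (simp add: zero_less_mult_iff)
  have "\<eta> * \<eta> \<le> \<eta> * (1/4)" using \<eta> by (intro mult_left_mono) auto
  then have sq: "\<eta>^2 \<le> \<eta> / 4" by (simp add: power2_eq_square)
  then have "0 \<le> \<eta> * (1 - \<eta>^2 - 2 * \<eta>)" using \<eta> by simp
  then have \<eta>2: "\<eta>^2 \<le> (1 - \<eta>^2) * (\<eta> / 2)" by (simp add: algebra_simps power2_eq_square)
  have "\<eta>^2 * real n \<le> real n" using sq \<eta> n by simp
  with M have "M \<le> n" by linarith
  with M have nM: "(1 - \<eta>^2) * real n \<le> real (n - M)" by (simp add: of_nat_diff algebra_simps)
  have pos: "0 < (1 - \<eta>^2) * real n" using sq \<eta> n by simp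
  have "real (M * d) \<le> \<eta>^2 * real n * real d"
    using M d by (simp add: mult_right_mono)
  also have "\<dots> \<le> ((1 - \<eta>^2) * real n) * (\<eta> * real d / 2)"
    using mult_right_mono[OF \<eta>2, of "real n * real d"] n d by (simp add: algebra_simps)
  also have "\<dots> < ((1 - \<eta>^2) * real n) * real (d - k + 1)"
    using gap pos by (intro mult_strict_left_mono) auto
  also have "\<dots> \<le> real (n - M) * real (d - k + 1)"
    using nM by (intro mult_right_mono) auto
  finally have "real (M * d) < real ((n - M) * (d - k + 1))"
    by (simp only: of_nat_mult)
  then show ?thesis
    unfolding M_def by (simp only: of_nat_less_iff)
qed

theorem lemma6p1:
  fixes V :: "'a set" and E :: "'a \<Rightarrow> 'a \<Rightarrow> bool" and \<eta> :: real and n d :: nat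
  assumes "0 < \<eta>" and "\<eta> \<le> 1/4"
    and "simple_graph V E" and "card V = n" and "regular V E d"
    and "2 / \<eta> \<le> real d" and "real d \<le> \<eta> * sqrt (real n)"
  shows "\<exists>c :: nat \<Rightarrow> 'a. \<exists>L :: nat \<Rightarrow> 'a set.
           (\<forall>i < d. is_star V E (nat \<lfloor>(1 - \<eta>/2) * real d\<rfloor>) (c i) (L i)) \<and>
           (\<forall>i < d. \<forall>j < d. i \<noteq> j \<longrightarrow> (insert (c i) (L i)) \<inter> (insert (c j) (L j)) = {})"
proof -
  define k where "k = nat \<lfloor>(1 - \<eta>/2) * real d\<rfloor>"
  have "k + 1 \<le> d" and gap: "\<eta> * real d / 2 \<le> real (d - k)"
    using floor_star_size_bounds[OF assms(1) _ assms(6) k_def] assms(2) by simp_all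
  moreover have "d * (k + 1) * d < (card V - d * (k + 1)) * (d - k + 1)"
    using star_counting_room[OF assms(1,2) \<open>k + 1 \<le> d\<close> gap assms(7)] assms(4) by simp
  ultimately obtain c L where "disjoint_stars V E k d c L"
    using disjoint_stars_greedy[OF assms(3,5)] by fastforce
  then show ?thesis
    unfolding disjoint_stars_def k_def by blast
qed

end
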